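(* Let $X$ be a continuous random variable with mean $\mu$ and density $f$ satisfying $\int_{-\infty}^{x}(\mu-t)f(t)\,dt=q(x)f(x)$ for all $x\in\mathbb{R}$, where $q(x)=\delta(x-\mu)^2+\beta(x-\mu)+\gamma$. Then $X$ is symmetric if and only if $\beta=0$.
   Context: $X$ symmetric means that $X-c$ and $c-X$ have the same distribution for some $c\in\mathbb{R}$. *)

theory Defs
  imports "HOL-Probability.Probability"
begin

definition symmetric_rv :: "'a measure \<Rightarrow> ('a \<Rightarrow> real) \<Rightarrow> bool" where
  "symmetric_rv M X \<longleftrightarrow>
     (\<exists>c::real. distr M borel (\<lambda>\<omega>. X \<omega> - c) = distr M borel (\<lambda>\<omega>. c - X \<omega>))"

end

theory Submission
  imports Defs
begin

text \<open>Let \<open>F x = \<integral>\<^sub>-\<^sub>\<infinity>\<^sup>x (\<mu> - t) f t dt\<close>; it is nonnegative, positive at \<open>\<mu>\<close>, and equals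
  \<open>q x * f x\<close>. Reflection in \<open>\<mu>\<close> shows that \<open>\<Phi> x = F x - F (2\<mu> - x)\<close> is the cumulative integral
  of \<open>\<phi> t = (\<mu> - t) (f t - f (2\<mu> - t))\<close>.
  If \<open>f\<close> is symmetric, its centre must be the mean \<open>\<mu>\<close>, so \<open>F\<close> is symmetric about \<open>\<mu>\<close>, and
  comparing \<open>q f\<close> at \<open>x\<close> and \<open>2\<mu> - x\<close> leaves \<open>2\<beta> (x - \<mu>) f x = 0\<close> almost everywhere, so \<open>\<beta> = 0\<close>.
  Conversely, if \<open>\<beta> = 0\<close> then \<open>q\<close> is symmetric about \<open>\<mu>\<close>; wherever \<open>\<Phi> x \<noteq> 0\<close> we get \<open>q x > 0\<close> and
  \<open>\<Phi> x = q x (f x - f (2\<mu> - x))\<close>, so right of \<open>\<mu>\<close> the integrand \<open>\<phi>\<close> has the sign opposite to \<open>\<Phi>\<close>.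
  The continuous function \<open>\<Phi>\<close>, which vanishes at \<open>\<mu>\<close>, therefore never leaves 0, and
  \<open>q x (f x - f (2\<mu> - x)) = 0\<close> everywhere; as \<open>q \<mu> = \<gamma> \<noteq> 0\<close>, the zeros of \<open>q\<close> form a null set.\<close>

definition cum_integral :: "(real \<Rightarrow> real) \<Rightarrow> real \<Rightarrow> real" where
  "cum_integral \<phi> x = (LINT t:{..x}|lborel. \<phi> t)"

lemma cum_integral_indicator: "cum_integral \<phi> x = (\<integral>t. indicator {..x} t * \<phi> t \<partial>lborel)"
  by (simp add: cum_integral_def set_lebesgue_integral_def)

lemma integrable_indicator_mult:
  fixes \<phi> :: "real \<Rightarrow> real"
  assumes "integrable lborel \<phi>" "A \<in> sets borel"
  shows "integrable lborel (\<lambda>x. indicator A x * \<phi> x)"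
  using integrable_mult_indicator[of A lborel \<phi>] assms by simp

lemma cum_integral_minus: "cum_integral (\<lambda>t. - \<phi> t) x = - cum_integral \<phi> x"
  by (simp add: cum_integral_indicator)

lemma cum_integral_add:
  fixes \<phi> \<psi> :: "real \<Rightarrow> real"
  assumes "integrable lborel \<phi>" "integrable lborel \<psi>"
  shows "cum_integral (\<lambda>t. \<phi> t + \<psi> t) x = cum_integral \<phi> x + cum_integral \<psi> x"
  unfolding cum_integral_indicator distrib_left
  using assms by (intro Bochner_Integration.integral_add integrable_indicator_mult) auto

lemma integral_indicator_split:
  fixes \<phi> :: "real \<Rightarrow> real"
  assumes "integrable lborel \<phi>" and [measurable]: "A \<in> sets borel" "B \<in> sets borel"
    and "A \<inter> B = {}"
  shows "(\<integral>t. indicator (A \<union> B) t * \<phi> t \<partial>lborel)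
       = (\<integral>t. indicator A t * \<phi> t \<partial>lborel) + (\<integral>t. indicator B t * \<phi> t \<partial>lborel)"
proof -
  have "(\<integral>t. indicator (A \<union> B) t * \<phi> t \<partial>lborel)
      = (\<integral>t. indicator A t * \<phi> t + indicator B t * \<phi> t \<partial>lborel)"
    using assms(4) by (intro Bochner_Integration.integral_cong) (auto simp: indicator_def)
  also have "\<dots> = (\<integral>t. indicator A t * \<phi> t \<partial>lborel) + (\<integral>t. indicator B t * \<phi> t \<partial>lborel)"
    using assms(1) by (intro Bochner_Integration.integral_add integrable_indicator_mult) auto
  finally show ?thesis .
qed

lemma cum_integral_diff:
  fixes \<phi> :: "real \<Rightarrow> real"
  assumes "integrable lborel \<phi>" "s \<le> t"
  shows "cum_integral \<phi> t - cum_integral \<phi> s = (\<integral>u. indicator {s<..t} u * \<phi> u \<partial>lborel)"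
proof -
  have "{..s} \<union> {s<..t} = {..t}" "{..s} \<inter> {s<..t} = {}"
    using assms(2) by auto
  then show ?thesis
    using integral_indicator_split[OF assms(1), of "{..s}" "{s<..t}"]
    by (simp add: cum_integral_indicator)
qed

lemma cum_integral_add_tail:
  fixes \<phi> :: "real \<Rightarrow> real"
  assumes "integrable lborel \<phi>"
  shows "cum_integral \<phi> x + (\<integral>u. indicator {x<..} u * \<phi> u \<partial>lborel) = (\<integral>u. \<phi> u \<partial>lborel)"
proof -
  have "{..x} \<union> {x<..} = UNIV" "{..x} \<inter> {x<..} = {}"
    by auto
  then show ?thesis
    using integral_indicator_split[OF assms, of "{..x}" "{x<..}"]
    by (simp add: cum_integral_indicator)
qed

lemma continuous_on_cum_integral:
  fixes \<phi> :: "real \<Rightarrow> real"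
  assumes int: "integrable lborel \<phi>"
  shows "continuous_on {a..b} (cum_integral \<phi>)"
proof -
  have [measurable]: "\<phi> \<in> borel_measurable borel"
    using borel_measurable_integrable[OF int] by simp
  have set_int: "set_integrable lborel {a..x} \<phi>" for x
    unfolding set_integrable_def using integrable_mult_indicator[OF _ int] by simp
  have eq: "cum_integral \<phi> x = cum_integral \<phi> a + integral {a..x} \<phi>" if "a \<le> x" for x
  proof -
    have "(\<integral>u. indicator {a<..x} u * \<phi> u \<partial>lborel) = (\<integral>u. indicator {a..x} u * \<phi> u \<partial>lborel)"
      using AE_lborel_singleton[of a]
      by (intro integral_cong_AE) (auto elim!: eventually_mono simp: indicator_def)
    also have "\<dots> = integral {a..x} \<phi>"
      using set_borel_integral_eq_integral(2)[OF set_int] by (simp add: set_lebesgue_integral_def)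
    finally show ?thesis
      using cum_integral_diff[OF int that] by simp
  qed
  have "continuous_on {a..b} (\<lambda>x. cum_integral \<phi> a + integral {a..x} \<phi>)"
    using set_borel_integral_eq_integral(1)[OF set_int]
    by (intro continuous_intros indefinite_integral_continuous_1)
  then show ?thesis
    by (rule continuous_on_eq) (rule eq[symmetric], simp)
qed

lemma cum_integral_reflect:
  fixes g :: "real \<Rightarrow> real"
  assumes int: "integrable lborel g" and total: "(\<integral>t. g t \<partial>lborel) = 0"
  shows "cum_integral (\<lambda>t. g (2*c - t)) x = - cum_integral g (2*c - x)"
proof -
  have [measurable]: "g \<in> borel_measurable borel"
    using borel_measurable_integrable[OF int] by simp
  have "cum_integral (\<lambda>t. g (2*c - t)) x = (\<integral>t. indicator {2*c - x..} t * g t \<partial>lborel)"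
    using lborel_integral_real_affine[of "-1" "\<lambda>t. indicator {2*c - x..} t * g t" "2*c"]
    by (simp add: cum_integral_indicator indicator_def)
  also have "\<dots> = (\<integral>t. indicator {2*c - x<..} t * g t \<partial>lborel)"
    using AE_lborel_singleton[of "2*c - x"]
    by (intro integral_cong_AE) (auto elim!: eventually_mono simp: indicator_def)
  also have "\<dots> = - cum_integral g (2*c - x)"
    using cum_integral_add_tail[OF int, of "2*c - x"] total by simp
  finally show ?thesis .
qed

lemma nonpos_if_nonincreasing_where_pos:
  fixes h :: "real \<Rightarrow> real"
  assumes cont: "continuous_on {a..b} h" and "a \<le> b" and "h a \<le> 0"
    and decr: "\<And>s t. a \<le> s \<Longrightarrow> s < t \<Longrightarrow> t \<le> b \<Longrightarrow> (\<forall>u\<in>{s<..t}. 0 < h u) \<Longrightarrow> h t \<le> h s"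
  shows "h b \<le> 0"
proof (rule ccontr)
  assume hb: "\<not> h b \<le> 0"
  define S where "S = {a..b} \<inter> h -` {..0}"
  have "closed S"
    unfolding S_def by (rule continuous_closed_preimage[OF cont]) auto
  moreover have "a \<in> S" "bdd_above S"
    using assms by (auto simp: S_def bdd_above_def)
  ultimately have s: "Sup S \<in> S" "a \<le> Sup S"
    using closed_contains_Sup cSup_upper by blast+
  have "0 < h u" if u: "u \<in> {Sup S<..b}" for u
  proof (rule ccontr)
    assume "\<not> 0 < h u"
    then have "u \<in> S"
      using u s(2) by (auto simp: S_def)
    then show False
      using u cSup_upper[OF _ \<open>bdd_above S\<close>] by fastforce
  qed
  moreover have "Sup S < b"
    using s(1) hb by (auto simp: S_def less_le)
  ultimately have "h b \<le> h (Sup S)"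
    using decr[OF s(2)] by blast
  then show False
    using s(1) hb by (auto simp: S_def)
qed

lemma cum_integral_eq_0_right:
  fixes \<phi> :: "real \<Rightarrow> real"
  assumes int: "integrable lborel \<phi>" and "cum_integral \<phi> a = 0" and "a \<le> b"
    and pos: "\<And>t. a < t \<Longrightarrow> 0 < cum_integral \<phi> t \<Longrightarrow> \<phi> t \<le> 0"
    and neg: "\<And>t. a < t \<Longrightarrow> cum_integral \<phi> t < 0 \<Longrightarrow> 0 \<le> \<phi> t"
  shows "cum_integral \<phi> b = 0"
proof -
  note cont = continuous_on_cum_integral[OF int]
  have "cum_integral \<phi> b \<le> 0"
  proof (rule nonpos_if_nonincreasing_where_pos[OF cont \<open>a \<le> b\<close>])
    fix s t assume st: "a \<le> s" "s < t" and "\<forall>u\<in>{s<..t}. 0 < cum_integral \<phi> u"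
    then have "0 \<le> - (indicator {s<..t} u * \<phi> u)" for u
      using pos[of u] by (cases "u \<in> {s<..t}") auto
    then have "0 \<le> (\<integral>u. - (indicator {s<..t} u * \<phi> u) \<partial>lborel)"
      by (rule Bochner_Integration.integral_nonneg)
    then show "cum_integral \<phi> t \<le> cum_integral \<phi> s"
      using cum_integral_diff[OF int, of s t] st by simp
  qed (simp add: \<open>cum_integral \<phi> a = 0\<close>)
  moreover have "- cum_integral \<phi> b \<le> 0"
  proof (rule nonpos_if_nonincreasing_where_pos[OF continuous_on_minus[OF cont] \<open>a \<le> b\<close>])
    fix s t assume st: "a \<le> s" "s < t" and "\<forall>u\<in>{s<..t}. 0 < - cum_integral \<phi> u"
    then have "0 \<le> indicator {s<..t} u * \<phi> u" for u
      using neg[of u] by (cases "u \<in> {s<..t}") auto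
    then have "0 \<le> (\<integral>u. indicator {s<..t} u * \<phi> u \<partial>lborel)"
      by (rule Bochner_Integration.integral_nonneg)
    then show "- cum_integral \<phi> t \<le> - cum_integral \<phi> s"
      using cum_integral_diff[OF int, of s t] st by simp
  qed (simp add: \<open>cum_integral \<phi> a = 0\<close>)
  ultimately show ?thesis
    by simp
qed

lemma AE_lborel_reflect_iff:
  fixes f :: "real \<Rightarrow> real"
  assumes [measurable]: "f \<in> borel_measurable borel"
  shows "(AE x in lborel. f (c + x) = f (c - x)) \<longleftrightarrow> (AE x in lborel. f x = f (2*c - x))"
proof
  assume "AE x in lborel. f (c + x) = f (c - x)"
  from AE_borel_affine[OF _ _ this, of 1 "-c"] show "AE x in lborel. f x = f (2*c - x)"
    by simp
next
  assume "AE x in lborel. f x = f (2*c - x)"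
  from AE_borel_affine[OF _ _ this, of 1 c] show "AE x in lborel. f (c + x) = f (c - x)"
    by simp
qed

lemma symmetric_rv_iff_AE_reflect:
  fixes X :: "'a \<Rightarrow> real" and f :: "real \<Rightarrow> real"
  assumes "prob_space M" and nonneg: "\<And>x. 0 \<le> f x"
    and dens: "distributed M lborel X (\<lambda>x. ennreal (f x))"
  shows "symmetric_rv M X \<longleftrightarrow> (\<exists>c. AE x in lborel. f x = f (2*c - x))"
proof -
  interpret prob_space M by fact
  have [measurable]: "f \<in> borel_measurable borel"
    using distributed_real_measurable[OF _ dens] nonneg by simp
  have "distr M borel (\<lambda>\<omega>. X \<omega> - c) = distr M borel (\<lambda>\<omega>. c - X \<omega>)
      \<longleftrightarrow> (AE x in lborel. f (c + x) = f (c - x))" for c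
  proof -
    have "distributed M lborel (\<lambda>\<omega>. - c + 1 * X \<omega>) (\<lambda>x. ennreal (f ((x - - c) / 1)) / ennreal \<bar>1\<bar>)"
      by (rule distributed_affine[OF dens]) simp
    then have plus: "distributed M lborel (\<lambda>\<omega>. X \<omega> - c) (\<lambda>x. ennreal (f (c + x)))"
      by (simp add: divide_ennreal_def add.commute)
    have "distributed M lborel (\<lambda>\<omega>. c + -1 * X \<omega>) (\<lambda>x. ennreal (f ((x - c) / -1)) / ennreal \<bar>-1\<bar>)"
      by (rule distributed_affine[OF dens]) simp
    then have minus: "distributed M lborel (\<lambda>\<omega>. c - X \<omega>) (\<lambda>x. ennreal (f (c - x)))"
      by (simp add: divide_ennreal_def)
    have distr_borel: "distr M borel Y = distr M lborel Y" for Y :: "'a \<Rightarrow> real"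
      by (rule distr_cong) simp_all
    have "(\<integral>\<^sup>+x. ennreal (f (c + x)) \<partial>lborel) = emeasure M (space M)"
      using distributed_emeasure[OF plus, of UNIV] by (simp add: Int_absorb1)
    then have finite: "(\<integral>\<^sup>+x. ennreal (f (c + x)) \<partial>lborel) \<noteq> \<infinity>"
      by simp
    show ?thesis
      using plus minus finite_density_unique[OF _ _ _ _ finite, of "\<lambda>x. ennreal (f (c - x))"] nonneg
      by (simp add: distributed_def distr_borel)
  qed
  then show ?thesis
    unfolding symmetric_rv_def by (simp add: AE_lborel_reflect_iff)
qed

lemma AE_quadratic_nonzero:
  fixes \<delta> \<gamma> \<mu> :: real
  assumes "\<gamma> \<noteq> 0"
  shows "AE x in lborel. \<delta> * (x - \<mu>)^2 + \<gamma> \<noteq> 0"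
proof (rule AE_I')
  define r where "r = sqrt (- \<gamma> / \<delta>)"
  show "{\<mu> + r, \<mu> - r} \<in> null_sets lborel"
    by (rule finite_imp_null_set_lborel) simp
  have "x = \<mu> + r \<or> x = \<mu> - r" if "\<delta> * (x - \<mu>)^2 + \<gamma> = 0" for x
  proof -
    from that assms have "(x - \<mu>)^2 = - \<gamma> / \<delta>"
      by (cases "\<delta> = 0") (auto simp: field_simps)
    then have "\<bar>x - \<mu>\<bar> = r"
      unfolding r_def by (metis real_sqrt_abs)
    then show ?thesis
      by (auto simp: abs_if split: if_splits)
  qed
  then show "{x \<in> space lborel. \<not> \<delta> * (x - \<mu>)^2 + \<gamma> \<noteq> 0} \<subseteq> {\<mu> + r, \<mu> - r}"
    by auto
qed

locale density_with_mean =
  fixes f :: "real \<Rightarrow> real" and \<mu> :: real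
  assumes nonneg: "\<And>x. 0 \<le> f x"
    and integrable: "integrable lborel f"
    and integral: "(\<integral>x. f x \<partial>lborel) = 1"
    and integrable_moment: "integrable lborel (\<lambda>x. f x * x)"
    and integral_moment: "(\<integral>x. f x * x \<partial>lborel) = \<mu>"
begin

lemma measurable_density[measurable]: "f \<in> borel_measurable borel"
  using borel_measurable_integrable[OF integrable] by simp

lemma not_AE_zero: "\<not> (AE x in lborel. f x = 0)"
  using integral integral_eq_zero_AE[of f lborel] by auto

lemma mean_dev_eq: "(\<lambda>t. (\<mu> - t) * f t) = (\<lambda>t. \<mu> * f t - f t * t)"
  by (auto simp: algebra_simps)

lemma integrable_mean_dev: "integrable lborel (\<lambda>t. (\<mu> - t) * f t)"
  unfolding mean_dev_eq using integrable integrable_moment by auto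

lemma integral_mean_dev: "(\<integral>t. (\<mu> - t) * f t \<partial>lborel) = 0"
  unfolding mean_dev_eq using integrable integrable_moment
  by (simp add: integral integral_moment)

lemma integrable_mean_dev_reflect: "integrable lborel (\<lambda>t. (t - \<mu>) * f (2*\<mu> - t))"
  using integrable_mean_dev lborel_integrable_real_affine_iff[of "-1" "\<lambda>t. (\<mu> - t) * f t" "2*\<mu>"]
  by simp

lemma cum_integral_mean_dev_reflect:
  "cum_integral (\<lambda>t. (t - \<mu>) * f (2*\<mu> - t)) x = - cum_integral (\<lambda>t. (\<mu> - t) * f t) (2*\<mu> - x)"
  using cum_integral_reflect[OF integrable_mean_dev integral_mean_dev, of \<mu> x] by simp

lemma cum_integral_mean_dev_nonneg: "0 \<le> cum_integral (\<lambda>t. (\<mu> - t) * f t) x"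
proof (cases "x \<le> \<mu>")
  case True
  then show ?thesis
    unfolding cum_integral_indicator
    by (intro Bochner_Integration.integral_nonneg) (auto simp: indicator_def nonneg)
next
  case False
  then have "0 \<le> (\<integral>t. - (indicator {x<..} t * ((\<mu> - t) * f t)) \<partial>lborel)"
    by (intro Bochner_Integration.integral_nonneg)
      (auto simp: indicator_def intro!: mult_nonpos_nonneg nonneg)
  then show ?thesis
    using cum_integral_add_tail[OF integrable_mean_dev, of x] integral_mean_dev by simp
qed

lemma cum_integral_mean_dev_at_mean_pos: "0 < cum_integral (\<lambda>t. (\<mu> - t) * f t) \<mu>"
proof (rule ccontr)
  assume "\<not> 0 < cum_integral (\<lambda>t. (\<mu> - t) * f t) \<mu>"
  then have left: "(\<integral>t. indicator {..\<mu>} t * ((\<mu> - t) * f t) \<partial>lborel) = 0"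
    using cum_integral_mean_dev_nonneg[of \<mu>] by (simp add: cum_integral_indicator)
  then have right: "(\<integral>t. - (indicator {\<mu><..} t * ((\<mu> - t) * f t)) \<partial>lborel) = 0"
    using cum_integral_add_tail[OF integrable_mean_dev, of \<mu>] integral_mean_dev
    by (simp add: cum_integral_indicator)
  have "AE t in lborel. indicator {..\<mu>} t * ((\<mu> - t) * f t) = 0"
    using left integrable_indicator_mult[OF integrable_mean_dev, of "{..\<mu>}"]
    by (subst (asm) integral_nonneg_eq_0_iff_AE) (auto simp: indicator_def nonneg)
  moreover have "AE t in lborel. - (indicator {\<mu><..} t * ((\<mu> - t) * f t)) = 0"
    using right integrable_indicator_mult[OF integrable_mean_dev, of "{\<mu><..}"]
    by (subst (asm) integral_nonneg_eq_0_iff_AE)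
      (auto simp: indicator_def intro!: mult_nonpos_nonneg nonneg)
  ultimately have "AE t in lborel. f t = 0"
    using AE_lborel_singleton[of \<mu>] by eventually_elim (auto simp: indicator_def split: if_splits)
  then show False
    using not_AE_zero by simp
qed

lemma center_eq_mean:
  assumes "AE x in lborel. f x = f (2*c - x)"
  shows "c = \<mu>"
proof -
  have "\<mu> = (\<integral>x. f (2*c - x) * x \<partial>lborel)"
    unfolding integral_moment[symmetric]
    using assms by (intro integral_cong_AE) auto
  also have "\<dots> = (\<integral>s. f s * (2*c - s) \<partial>lborel)"
    using lborel_integral_real_affine[of "-1" "\<lambda>s. f s * (2*c - s)" "2*c"] by simp
  also have "\<dots> = (\<integral>s. 2*c * f s - f s * s \<partial>lborel)"
    by (simp add: algebra_simps)
  also have "\<dots> = 2*c - \<mu>"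
    using integrable integrable_moment by (simp add: integral integral_moment)
  finally show ?thesis
    by simp
qed

end

locale pearson_density = density_with_mean +
  fixes \<delta> \<beta> \<gamma> :: real
  assumes pearson: "\<And>x. cum_integral (\<lambda>t. (\<mu> - t) * f t) x
                          = (\<delta> * (x - \<mu>)^2 + \<beta> * (x - \<mu>) + \<gamma>) * f x"
begin

lemma beta_zero_if_symmetric:
  assumes sym: "AE x in lborel. f x = f (2*c - x)"
  shows "\<beta> = 0"
proof (rule ccontr)
  assume "\<beta> \<noteq> 0"
  define F where "F = cum_integral (\<lambda>t. (\<mu> - t) * f t)"
  define Q where "Q x = \<delta> * (x - \<mu>)^2 + \<beta> * (x - \<mu>) + \<gamma>" for x
  have sym\<mu>: "AE x in lborel. f x = f (2*\<mu> - x)"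
    using sym center_eq_mean[OF sym] by simp
  have "cum_integral (\<lambda>t. (t - \<mu>) * f (2*\<mu> - t)) x = cum_integral (\<lambda>t. - ((\<mu> - t) * f t)) x" for x
    unfolding cum_integral_indicator using sym\<mu>
    by (intro integral_cong_AE) (auto elim!: eventually_mono simp: algebra_simps)
  then have F_sym: "F x = F (2*\<mu> - x)" for x
    using cum_integral_mean_dev_reflect[of x] by (simp add: F_def cum_integral_minus)
  have "AE x in lborel. f x = 0"
    using sym\<mu> AE_lborel_singleton[of \<mu>]
  proof eventually_elim
    case (elim x)
    have "Q x * f x = Q (2*\<mu> - x) * f x"
      using F_sym[of x] pearson[of x] pearson[of "2*\<mu> - x"] elim(1)
      by (simp add: F_def Q_def)
    moreover have "Q x - Q (2*\<mu> - x) = 2 * \<beta> * (x - \<mu>)"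
      by (simp add: Q_def power2_eq_square algebra_simps)
    ultimately have "2 * \<beta> * (x - \<mu>) * f x = 0"
      by (metis left_diff_distrib right_minus_eq)
    then show "f x = 0"
      using \<open>\<beta> \<noteq> 0\<close> elim(2) by simp
  qed
  then show False
    using not_AE_zero by simp
qed

lemma cum_integral_mean_dev_symmetric_if_beta_zero:
  assumes "\<beta> = 0"
  shows "cum_integral (\<lambda>t. (\<mu> - t) * f t) x = cum_integral (\<lambda>t. (\<mu> - t) * f t) (2*\<mu> - x)"
proof -
  define F where "F = cum_integral (\<lambda>t. (\<mu> - t) * f t)"
  define q where "q x = \<delta> * (x - \<mu>)^2 + \<gamma>" for x
  define \<phi> where "\<phi> t = (\<mu> - t) * f t + (t - \<mu>) * f (2*\<mu> - t)" for t
  have F_q: "F x = q x * f x" "F (2*\<mu> - x) = q x * f (2*\<mu> - x)" for x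
    using pearson[of x] pearson[of "2*\<mu> - x"] assms
    by (simp_all add: F_def q_def power2_eq_square algebra_simps)
  have \<phi>_eq: "\<phi> t = (\<mu> - t) * (f t - f (2*\<mu> - t))" for t
    by (simp add: \<phi>_def algebra_simps)
  have \<phi>_int: "integrable lborel \<phi>"
    unfolding \<phi>_def using integrable_mean_dev integrable_mean_dev_reflect by simp
  have \<Phi>: "cum_integral \<phi> x = F x - F (2*\<mu> - x)" for x
    unfolding \<phi>_def F_def
    by (simp add: cum_integral_add[OF integrable_mean_dev integrable_mean_dev_reflect] cum_integral_mean_dev_reflect)
  have \<Phi>_nonzero: "0 < q t \<and> cum_integral \<phi> t = q t * (f t - f (2*\<mu> - t))"
    if "cum_integral \<phi> t \<noteq> 0" for t
  proof (cases "q t \<le> 0")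
    case True
    then have "F t \<le> 0" "F (2*\<mu> - t) \<le> 0"
      unfolding F_q(1)[of t] F_q(2)[of t] using nonneg by (simp_all add: mult_nonpos_nonneg)
    then have "cum_integral \<phi> t = 0"
      using \<Phi>[of t] cum_integral_mean_dev_nonneg[of t] cum_integral_mean_dev_nonneg[of "2*\<mu> - t"]
      by (simp add: F_def)
    with that show ?thesis
      by simp
  next
    case False
    then show ?thesis
      using \<Phi>[of t, unfolded F_q(1)[of t] F_q(2)[of t]] by (simp add: algebra_simps)
  qed
  have \<Phi>_right: "cum_integral \<phi> x = 0" if "\<mu> \<le> x" for x
  proof (rule cum_integral_eq_0_right[OF \<phi>_int _ that])
    show "cum_integral \<phi> \<mu> = 0"
      using \<Phi>[of \<mu>] by simp
  next
    fix t assume "\<mu> < t" "0 < cum_integral \<phi> t"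
    then have "0 < q t" "0 < q t * (f t - f (2*\<mu> - t))"
      using \<Phi>_nonzero[of t] by auto
    then have "0 \<le> f t - f (2*\<mu> - t)"
      by (simp add: zero_less_mult_iff)
    then show "\<phi> t \<le> 0"
      using \<open>\<mu> < t\<close> by (simp add: \<phi>_eq mult_nonpos_nonneg)
  next
    fix t assume "\<mu> < t" "cum_integral \<phi> t < 0"
    then have "0 < q t" "q t * (f t - f (2*\<mu> - t)) < 0"
      using \<Phi>_nonzero[of t] by auto
    then have "f t - f (2*\<mu> - t) \<le> 0"
      by (simp add: mult_less_0_iff)
    then show "0 \<le> \<phi> t"
      using \<open>\<mu> < t\<close> by (simp add: \<phi>_eq mult_nonpos_nonpos)
  qed
  have "cum_integral \<phi> x = 0"
  proof (cases "\<mu> \<le> x")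
    case False
    then show ?thesis
      using \<Phi>_right[of "2*\<mu> - x"] \<Phi>[of x] \<Phi>[of "2*\<mu> - x"] by simp
  qed (rule \<Phi>_right)
  then show ?thesis
    using \<Phi>[of x] by (simp add: F_def)
qed

lemma symmetric_if_beta_zero:
  assumes "\<beta> = 0"
  shows "AE x in lborel. f x = f (2*\<mu> - x)"
proof -
  have "\<gamma> * f \<mu> > 0"
    using cum_integral_mean_dev_at_mean_pos pearson[of \<mu>] by simp
  then have "AE x in lborel. \<delta> * (x - \<mu>)^2 + \<gamma> \<noteq> 0"
    by (intro AE_quadratic_nonzero) auto
  then show ?thesis
  proof eventually_elim
    case (elim x)
    have "(\<delta> * (x - \<mu>)^2 + \<gamma>) * f x = (\<delta> * (2*\<mu> - x - \<mu>)^2 + \<gamma>) * f (2*\<mu> - x)"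
      using cum_integral_mean_dev_symmetric_if_beta_zero[OF assms, of x] pearson[of x] pearson[of "2*\<mu> - x"] assms
      by simp
    also have "(2*\<mu> - x - \<mu>)^2 = (x - \<mu>)^2"
      by (simp add: power2_eq_square algebra_simps)
    finally show ?case
      using elim by simp
  qed
qed

end

theorem lemma4p1:
  fixes M :: "'a measure" and X :: "'a \<Rightarrow> real" and f :: "real \<Rightarrow> real"
    and \<mu> \<delta> \<beta> \<gamma> :: real
  assumes "prob_space M"
    and f_nonneg: "\<And>x. f x \<ge> 0"
    and dens: "distributed M lborel X (\<lambda>x. ennreal (f x))"
    and int: "integrable M X"
    and mean: "prob_space.expectation M X = \<mu>"
    and pearson: "\<And>x. (LINT t:{..x}|lborel. (\<mu> - t) * f t)
                   = (\<delta> * (x - \<mu>)^2 + \<beta> * (x - \<mu>) + \<gamma>) * f x"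
  shows "symmetric_rv M X \<longleftrightarrow> \<beta> = 0"
proof -
  interpret prob_space M by fact
  interpret P: pearson_density f \<mu> \<delta> \<beta> \<gamma>
  proof
    show "integrable lborel f" "integrable lborel (\<lambda>x. f x * x)"
      using distributed_integrable[OF dens, of "\<lambda>_. 1"] distributed_integrable[OF dens, of "\<lambda>x. x"]
        f_nonneg int by simp_all
    show "(\<integral>x. f x \<partial>lborel) = 1" "(\<integral>x. f x * x \<partial>lborel) = \<mu>"
      using distributed_integral[OF dens, of "\<lambda>_. 1"] distributed_integral[OF dens, of "\<lambda>x. x"]
        f_nonneg prob_space mean by simp_all
  qed (simp_all add: f_nonneg pearson cum_integral_def)
  show ?thesis
    using symmetric_rv_iff_AE_reflect[OF \<open>prob_space M\<close> f_nonneg dens]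
      P.beta_zero_if_symmetric P.symmetric_if_beta_zero by blast
qed

end
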